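(* Let $X$ be a compactum, let $n\geq2$, and let $f:X\to X$ be a function. Consider the statements: (1) $f$ is an $F$-system; (2) $F_n(f)$ is an $F$-system; (3) $SF_n(f)$ is an $F$-system. Then (2) and (3) are equivalent, and (2) implies (1).
   Context: A compactum is a nondegenerate compact, perfect, Hausdorff topological space. $F_n(X)$ is the set of nonempty subsets of $X$ with at most $n$ points, with the Vietoris topology; $F_1(X)=\{\{x\}:x\in X\}$; $F_n(f)(A)=f(A)$. $SF_n(X)=F_n(X)/F_1(X)$ is the quotient collapsing $F_1(X)$ to a point, $q$ the quotient map, $F_X=q(F_1(X))$, and $SF_n(f)(\chi)=q(F_n(f)(q^{-1}(\chi)))$ for $\chi\neq F_X$, $SF_n(f)(F_X)=F_X$. A function $g:Z\to Z$ is transitive if for all nonempty open $U,V$ there is $k\in\mathbb{N}$ with $g^k(U)\cap V\neq\emptyset$; totally transitive if $g^m$ is transitive for all $m\in\mathbb{N}$; $g$ is an $F$-system if it is totally transitive and its set of periodic points ($z$ with $g^k(z)=z$ for some $k\in\mathbb{N}$) is dense in $Z$. *)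

theory Defs
  imports "HOL-Analysis.Analysis"
begin

definition compactum :: "'a topology \<Rightarrow> bool" where
  "compactum X \<longleftrightarrow> compact_space X \<and> Hausdorff_space X
     \<and> X derived_set_of (topspace X) = topspace X
     \<and> (\<exists>x\<in>topspace X. \<exists>y\<in>topspace X. x \<noteq> y)"

definition quotient_topology :: "'a topology \<Rightarrow> ('a \<Rightarrow> 'b) \<Rightarrow> 'b topology" where
  "quotient_topology X q = topology (\<lambda>U. U \<subseteq> q ` topspace X \<and>
       openin X {x \<in> topspace X. q x \<in> U})"

lemma istopology_quotient:
  "istopology (\<lambda>U. U \<subseteq> q ` topspace X \<and> openin X {x \<in> topspace X. q x \<in> U})"
proof -
  have 1: "openin X {x \<in> topspace X. q x \<in> S \<inter> T}"
    if "openin X {x \<in> topspace X. q x \<in> S}" "openin X {x \<in> topspace X. q x \<in> T}" for S T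
  proof -
    have "{x \<in> topspace X. q x \<in> S \<inter> T} = {x \<in> topspace X. q x \<in> S} \<inter> {x \<in> topspace X. q x \<in> T}"
      by auto
    then show ?thesis using that by auto
  qed
  have 2: "openin X {x \<in> topspace X. q x \<in> \<Union>K}"
    if "\<forall>S\<in>K. openin X {x \<in> topspace X. q x \<in> S}" for K
  proof -
    have "{x \<in> topspace X. q x \<in> \<Union>K} = (\<Union>S\<in>K. {x \<in> topspace X. q x \<in> S})"
      by auto
    moreover have "openin X (\<Union>S\<in>K. {x \<in> topspace X. q x \<in> S})"
      using that by (intro openin_Union) auto
    ultimately show ?thesis by simp
  qed
  show ?thesis
    unfolding istopology_def using 1 2 by blast
qed

lemma openin_quotient_topology:
  "openin (quotient_topology X q) U \<longleftrightarrow>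
     U \<subseteq> q ` topspace X \<and> openin X {x \<in> topspace X. q x \<in> U}"
  unfolding quotient_topology_def
  by (simp only: topology_inverse'[OF istopology_quotient])

definition Fn_set :: "nat \<Rightarrow> 'a topology \<Rightarrow> 'a set set" where
  "Fn_set n X = {A. A \<subseteq> topspace X \<and> A \<noteq> {} \<and> finite A \<and> card A \<le> n}"

definition F1_set :: "'a topology \<Rightarrow> 'a set set" where
  "F1_set X = {{x} | x. x \<in> topspace X}"

text \<open>Vietoris topology on \<open>F_n(X)\<close> (subspace of the Vietoris hyperspace), generated by
  the sets \<open>\<langle>U\<rangle> = {A. A \<subseteq> U}\<close> and \<open>{A. A \<inter> U \<noteq> {}}\<close> for \<open>U\<close> open.\<close>
definition Fn :: "nat \<Rightarrow> 'a topology \<Rightarrow> 'a set topology" where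
  "Fn n X = topology_generated_by
     ({{A \<in> Fn_set n X. A \<subseteq> U} | U. openin X U}
      \<union> {{A \<in> Fn_set n X. A \<inter> U \<noteq> {}} | U. openin X U})"

definition Fn_map :: "('a \<Rightarrow> 'a) \<Rightarrow> 'a set \<Rightarrow> 'a set" where
  "Fn_map f A = f ` A"

text \<open>The quotient map \<open>q : F_n(X) \<rightarrow> SF_n(X)\<close>; points of \<open>SF_n(X)\<close> are the equivalence
  classes, i.e. \<open>F_1(X)\<close> itself and singletons \<open>{A}\<close> with \<open>A \<notin> F_1(X)\<close>.\<close>
definition SFq :: "nat \<Rightarrow> 'a topology \<Rightarrow> 'a set \<Rightarrow> 'a set set" where
  "SFq n X A = (if A \<in> F1_set X then F1_set X else {A})"

definition SFn :: "nat \<Rightarrow> 'a topology \<Rightarrow> 'a set set topology" where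
  "SFn n X = quotient_topology (Fn n X) (SFq n X)"

definition SF_point :: "'a topology \<Rightarrow> 'a set set" where
  "SF_point X = F1_set X"

definition SFn_map :: "nat \<Rightarrow> 'a topology \<Rightarrow> ('a \<Rightarrow> 'a) \<Rightarrow> 'a set set \<Rightarrow> 'a set set" where
  "SFn_map n X f c = (if c = SF_point X then SF_point X
      else SFq n X (Fn_map f (the_elem {A \<in> topspace (Fn n X). SFq n X A = c})))"

definition dyn_transitive :: "'b topology \<Rightarrow> ('b \<Rightarrow> 'b) \<Rightarrow> bool" where
  "dyn_transitive Z g \<longleftrightarrow>
     (\<forall>U V. openin Z U \<and> U \<noteq> {} \<and> openin Z V \<and> V \<noteq> {} \<longrightarrow>
        (\<exists>k\<ge>1. (g ^^ k) ` U \<inter> V \<noteq> {}))"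

definition totally_transitive :: "'b topology \<Rightarrow> ('b \<Rightarrow> 'b) \<Rightarrow> bool" where
  "totally_transitive Z g \<longleftrightarrow> (\<forall>m\<ge>1. dyn_transitive Z (g ^^ m))"

definition periodic_points :: "'b topology \<Rightarrow> ('b \<Rightarrow> 'b) \<Rightarrow> 'b set" where
  "periodic_points Z g = {z \<in> topspace Z. \<exists>k\<ge>1. (g ^^ k) z = z}"

definition F_system :: "'b topology \<Rightarrow> ('b \<Rightarrow> 'b) \<Rightarrow> bool" where
  "F_system Z g \<longleftrightarrow> totally_transitive Z g \<and> Z closure_of (periodic_points Z g) = topspace Z"

end

theory Submission
  imports Defs
begin

text \<open>The quotient map \<open>q : F_n(X) \<rightarrow> SF_n(X)\<close> semiconjugates \<open>F_n(f)\<close> to \<open>SF_n(f)\<close>, and a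
  factor of an F-system is an F-system; this gives (2) \<open>\<Rightarrow>\<close> (3). Conversely, as \<open>X\<close> is Hausdorff,
  the non-singletons form an open set \<open>D\<close> on which \<open>q\<close> is injective and open, and as \<open>X\<close> is
  perfect and \<open>n \<ge> 2\<close>, \<open>D\<close> meets every nonempty open set: each neighbourhood of \<open>{x}\<close>
  contains some \<open>{x, y}\<close>. Pulling open sets and periodic points back through \<open>D\<close> gives
  (3) \<open>\<Rightarrow>\<close> (2). For (2) \<open>\<Rightarrow>\<close> (1) one works with the open sets \<open>\<langle>U\<rangle> = {A. A \<subseteq> U}\<close>: a
  transition from \<open>\<langle>U\<rangle>\<close> into \<open>\<langle>V\<rangle>\<close> moves every point of some finite \<open>A \<subseteq> U\<close> into \<open>V\<close>,
  and a periodic finite set \<open>A \<subseteq> U\<close> is mapped into itself by a power of \<open>f\<close>, hence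
  contains a periodic point of \<open>f\<close>.\<close>

definition semiconj_on :: "'a topology \<Rightarrow> ('a \<Rightarrow> 'a) \<Rightarrow> ('a \<Rightarrow> 'b) \<Rightarrow> ('b \<Rightarrow> 'b) \<Rightarrow> bool" where
  "semiconj_on T g q h \<longleftrightarrow> g ` topspace T \<subseteq> topspace T \<and> (\<forall>x\<in>topspace T. h (q x) = q (g x))"

lemma semiconj_on_funpow:
  assumes "semiconj_on T g q h"
  shows "semiconj_on T (g ^^ k) q (h ^^ k)"
proof (induction k)
  case 0
  then show ?case by (simp add: semiconj_on_def)
next
  case (Suc k)
  then show ?case using assms by (auto simp: semiconj_on_def)
qed

lemma dyn_transitiveD:
  assumes "dyn_transitive Z g" "openin Z U" "U \<noteq> {}" "openin Z V" "V \<noteq> {}"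
  obtains k x where "k \<ge> 1" "x \<in> U" "(g ^^ k) x \<in> V"
  using assms unfolding dyn_transitive_def by blast

lemma finite_self_map_has_periodic_point:
  assumes "finite A" "p ` A \<subseteq> A" "a \<in> A"
  obtains b d where "b \<in> A" "d \<ge> 1" "(p ^^ d) b = b"
proof -
  have orbit: "(p ^^ j) a \<in> A" for j
    by (induction j) (use assms in auto)
  then have "range (\<lambda>j. (p ^^ j) a) \<subseteq> A" by blast
  then have "finite (range (\<lambda>j. (p ^^ j) a))"
    using assms(1) finite_subset by blast
  then have "\<not> inj (\<lambda>j::nat. (p ^^ j) a)"
    using finite_imageD by blast
  then obtain i j where ij: "i < j" "(p ^^ i) a = (p ^^ j) a"
    unfolding inj_def by (metis linorder_neqE_nat)
  have "(p ^^ (j - i)) ((p ^^ i) a) = (p ^^ (j - i + i)) a"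
    by (simp only: funpow_add o_apply)
  also have "\<dots> = (p ^^ i) a"
    using ij by simp
  finally have "(p ^^ (j - i)) ((p ^^ i) a) = (p ^^ i) a" .
  moreover have "j - i \<ge> 1"
    using \<open>i < j\<close> by simp
  ultimately show ?thesis
    using that orbit by blast
qed

lemma F_system_of_powers:
  assumes "\<And>m. m \<ge> 1 \<Longrightarrow> dyn_transitive T (g ^^ m) \<Longrightarrow> dyn_transitive S (h ^^ m)"
    and "T closure_of periodic_points T g = topspace T \<Longrightarrow>
         S closure_of periodic_points S h = topspace S"
    and "F_system T g"
  shows "F_system S h"
  using assms unfolding F_system_def totally_transitive_def by blast

context
  fixes T :: "'a topology" and S :: "'b topology" and q :: "'a \<Rightarrow> 'b"
  assumes q_continuous: "continuous_map T S q" and q_onto: "q ` topspace T = topspace S"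
begin

lemma preimage_nonempty:
  assumes "openin S W" "W \<noteq> {}"
  shows "{x \<in> topspace T. q x \<in> W} \<noteq> {}"
proof -
  obtain w where "w \<in> W"
    using assms(2) by blast
  then have "w \<in> q ` topspace T"
    using assms(1) q_onto openin_subset by blast
  then show ?thesis
    using \<open>w \<in> W\<close> by blast
qed

lemma dyn_transitive_factor:
  assumes semiconj: "semiconj_on T g q h" and trans: "dyn_transitive T g"
  shows "dyn_transitive S h"
  unfolding dyn_transitive_def
proof (intro allI impI)
  fix U V
  assume UV: "openin S U \<and> U \<noteq> {} \<and> openin S V \<and> V \<noteq> {}"
  let ?U = "{x \<in> topspace T. q x \<in> U}" and ?V = "{x \<in> topspace T. q x \<in> V}"
  have "openin T ?U" "?U \<noteq> {}" "openin T ?V" "?V \<noteq> {}"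
    using UV openin_continuous_map_preimage[OF q_continuous] preimage_nonempty by blast+
  then obtain k x where k: "k \<ge> 1" "x \<in> ?U" "(g ^^ k) x \<in> ?V"
    by (rule dyn_transitiveD[OF trans])
  have "(h ^^ k) (q x) = q ((g ^^ k) x)"
    using semiconj_on_funpow[OF semiconj] k(2) unfolding semiconj_on_def by blast
  then have "(h ^^ k) (q x) \<in> V" "q x \<in> U"
    using k(2,3) by simp_all
  then show "\<exists>k\<ge>1. (h ^^ k) ` U \<inter> V \<noteq> {}"
    using k(1) by blast
qed

lemma periodic_points_factor:
  assumes "semiconj_on T g q h"
  shows "q ` periodic_points T g \<subseteq> periodic_points S h"
proof
  fix y assume "y \<in> q ` periodic_points T g"
  then obtain x k where x: "y = q x" "x \<in> topspace T" "k \<ge> 1" "(g ^^ k) x = x"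
    unfolding periodic_points_def by blast
  have "(h ^^ k) (q x) = q ((g ^^ k) x)"
    using semiconj_on_funpow[OF assms] x(2) unfolding semiconj_on_def by blast
  moreover have "q x \<in> topspace S"
    using q_onto x(2) by blast
  ultimately show "y \<in> periodic_points S h"
    using x unfolding periodic_points_def by auto
qed

lemma F_system_factor:
  assumes semiconj: "semiconj_on T g q h" and "F_system T g"
  shows "F_system S h"
proof (rule F_system_of_powers[OF _ _ \<open>F_system T g\<close>])
  show "dyn_transitive S (h ^^ m)" if "dyn_transitive T (g ^^ m)" for m
    using dyn_transitive_factor[OF semiconj_on_funpow[OF semiconj] that] .
  assume dense: "T closure_of periodic_points T g = topspace T"
  have "topspace S = q ` (T closure_of periodic_points T g)"
    by (simp only: dense q_onto)
  also have "\<dots> \<subseteq> S closure_of (q ` periodic_points T g)"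
    using continuous_map_image_closure_subset[OF q_continuous] .
  also have "\<dots> \<subseteq> S closure_of periodic_points S h"
    using closure_of_mono[OF periodic_points_factor[OF semiconj]] .
  finally show "S closure_of periodic_points S h = topspace S"
    by (intro subset_antisym closure_of_subset_topspace)
qed

end

text \<open>In the application \<open>D\<close> is \<open>F_n(X) - F_1(X)\<close>, which the quotient map sends
  homeomorphically onto an open subset of \<open>SF_n(X)\<close>.\<close>

context
  fixes T :: "'a topology" and S :: "'b topology" and q :: "'a \<Rightarrow> 'b" and D :: "'a set"
  assumes D_dense: "\<And>U. openin T U \<Longrightarrow> U \<noteq> {} \<Longrightarrow> U \<inter> D \<noteq> {}"
    and q_open_on_D: "\<And>U. openin T U \<Longrightarrow> openin S (q ` (U \<inter> D))"
    and q_inj_at_D: "\<And>x y. y \<in> D \<Longrightarrow> q x = q y \<Longrightarrow> x = y"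
begin

lemma dyn_transitive_lift:
  assumes semiconj: "semiconj_on T g q h" and trans: "dyn_transitive S h"
  shows "dyn_transitive T g"
  unfolding dyn_transitive_def
proof (intro allI impI)
  fix U V
  assume UV: "openin T U \<and> U \<noteq> {} \<and> openin T V \<and> V \<noteq> {}"
  then have "openin S (q ` (U \<inter> D))" "q ` (U \<inter> D) \<noteq> {}"
    "openin S (q ` (V \<inter> D))" "q ` (V \<inter> D) \<noteq> {}"
    using D_dense q_open_on_D by auto
  then obtain k x' where k: "k \<ge> 1" "x' \<in> q ` (U \<inter> D)" "(h ^^ k) x' \<in> q ` (V \<inter> D)"
    by (rule dyn_transitiveD[OF trans])
  then obtain x y where xy: "x \<in> U" "y \<in> V \<inter> D" "(h ^^ k) (q x) = q y"
    by blast
  have "x \<in> topspace T"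
    using UV xy(1) openin_subset by blast
  then have "(g ^^ k) x \<in> topspace T" "(h ^^ k) (q x) = q ((g ^^ k) x)"
    using semiconj_on_funpow[OF semiconj] unfolding semiconj_on_def by blast+
  then have "(g ^^ k) x = y"
    using q_inj_at_D xy(2,3) by simp
  then show "\<exists>k\<ge>1. (g ^^ k) ` U \<inter> V \<noteq> {}"
    using k(1) xy(1,2) by blast
qed

lemma F_system_lift:
  assumes semiconj: "semiconj_on T g q h" and "F_system S h"
  shows "F_system T g"
proof (rule F_system_of_powers[OF _ _ \<open>F_system S h\<close>])
  show "dyn_transitive T (g ^^ m)" if "dyn_transitive S (h ^^ m)" for m
    using dyn_transitive_lift[OF semiconj_on_funpow[OF semiconj] that] .
  assume dense: "S closure_of periodic_points S h = topspace S"
  show "T closure_of periodic_points T g = topspace T"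
    unfolding dense_intersects_open
  proof (intro allI impI)
    fix W assume W: "openin T W \<and> W \<noteq> {}"
    then have "openin S (q ` (W \<inter> D))" "q ` (W \<inter> D) \<noteq> {}"
      using D_dense q_open_on_D by auto
    then obtain y' where "y' \<in> periodic_points S h" "y' \<in> q ` (W \<inter> D)"
      using dense unfolding dense_intersects_open by blast
    then obtain y k where y: "y \<in> W \<inter> D" "k \<ge> 1" "(h ^^ k) (q y) = q y"
      unfolding periodic_points_def by blast
    have "y \<in> topspace T"
      using W y(1) openin_subset by blast
    then have "(g ^^ k) y \<in> topspace T" "(h ^^ k) (q y) = q ((g ^^ k) y)"
      using semiconj_on_funpow[OF semiconj] unfolding semiconj_on_def by blast+
    then have "(g ^^ k) y = y"
      using q_inj_at_D y by simp
    then show "periodic_points T g \<inter> W \<noteq> {}"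
      using y \<open>y \<in> topspace T\<close> unfolding periodic_points_def by blast
  qed
qed

end

lemma topspace_Fn: "topspace (Fn n X) = Fn_set n X"
proof -
  have "{A \<in> Fn_set n X. A \<inter> topspace X \<noteq> {}} = Fn_set n X"
    unfolding Fn_set_def by auto
  then show ?thesis
    unfolding Fn_def topology_generated_by_topspace by blast
qed

lemma openin_Fn_subset: "openin X U \<Longrightarrow> openin (Fn n X) {A \<in> Fn_set n X. A \<subseteq> U}"
  unfolding Fn_def by (rule topology_generated_by_Basis) blast

lemma openin_Fn_meets: "openin X U \<Longrightarrow> openin (Fn n X) {A \<in> Fn_set n X. A \<inter> U \<noteq> {}}"
  unfolding Fn_def by (rule topology_generated_by_Basis) blast

lemma singleton_in_Fn_set: "x \<in> topspace X \<Longrightarrow> n \<ge> 1 \<Longrightarrow> {x} \<in> Fn_set n X"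
  unfolding Fn_set_def by simp

lemma Fn_map_in_Fn_set:
  assumes "f ` topspace X \<subseteq> topspace X" "A \<in> Fn_set n X"
  shows "Fn_map f A \<in> Fn_set n X"
  using assms card_image_le[of A f] unfolding Fn_set_def Fn_map_def by auto

lemma funpow_Fn_map: "Fn_map f ^^ k = Fn_map (f ^^ k)"
proof
  show "(Fn_map f ^^ k) A = Fn_map (f ^^ k) A" for A
    by (induction k) (simp_all add: Fn_map_def image_comp)
qed

lemma openin_Fn_singleton_nhood:
  assumes "openin (Fn n X) U" "{x} \<in> U"
  shows "\<exists>W. openin X W \<and> x \<in> W \<and> {A \<in> Fn_set n X. A \<subseteq> W} \<subseteq> U"
proof -
  have "generate_topology_on
     ({{A \<in> Fn_set n X. A \<subseteq> V} | V. openin X V} \<union> {{A \<in> Fn_set n X. A \<inter> V \<noteq> {}} | V. openin X V}) U"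
    using assms(1) unfolding Fn_def openin_topology_generated_by_iff .
  then show ?thesis
    using assms(2)
  proof (induction U)
    case Empty
    then show ?case by simp
  next
    case (Int U1 U2)
    obtain W1 where "openin X W1" "x \<in> W1" "{A \<in> Fn_set n X. A \<subseteq> W1} \<subseteq> U1"
      using Int.IH(1) Int.prems by blast
    moreover obtain W2 where "openin X W2" "x \<in> W2" "{A \<in> Fn_set n X. A \<subseteq> W2} \<subseteq> U2"
      using Int.IH(2) Int.prems by blast
    ultimately show ?case
      by (intro exI[of _ "W1 \<inter> W2"]) auto
  next
    case (UN K)
    then obtain U' where "U' \<in> K" "{x} \<in> U'"
      by blast
    then obtain W where "openin X W" "x \<in> W" "{A \<in> Fn_set n X. A \<subseteq> W} \<subseteq> U'"
      using UN.IH by blast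
    then show ?case
      using \<open>U' \<in> K\<close> by blast
  next
    case (Basis U)
    then obtain V where V: "openin X V"
      "U = {A \<in> Fn_set n X. A \<subseteq> V} \<or> U = {A \<in> Fn_set n X. A \<inter> V \<noteq> {}}"
      by blast
    have "x \<in> V"
      using V(2) Basis.prems by auto
    moreover have "{A \<in> Fn_set n X. A \<subseteq> V} \<subseteq> U"
      using V(2) unfolding Fn_set_def by auto
    ultimately show ?case
      using V(1) by blast
  qed
qed

lemma openin_Fn_non_singletons:
  assumes "Hausdorff_space X"
  shows "openin (Fn n X) (Fn_set n X - F1_set X)"
proof (subst openin_subopen, intro ballI)
  fix A assume A: "A \<in> Fn_set n X - F1_set X"
  then obtain x y where xy: "x \<in> A" "y \<in> A" "x \<noteq> y" "x \<in> topspace X" "y \<in> topspace X"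
    unfolding Fn_set_def F1_set_def by blast
  obtain U V where UV: "openin X U" "openin X V" "x \<in> U" "y \<in> V" "disjnt U V"
    using assms xy(3-5) unfolding Hausdorff_space_def by blast
  define W where "W = {B \<in> Fn_set n X. B \<inter> U \<noteq> {}} \<inter> {B \<in> Fn_set n X. B \<inter> V \<noteq> {}}"
  have "openin (Fn n X) W"
    unfolding W_def using openin_Fn_meets UV(1,2) by blast
  moreover have "A \<in> W"
    using A xy(1,2) UV(3,4) unfolding W_def by blast
  moreover have "W \<subseteq> Fn_set n X - F1_set X"
    using UV(5) unfolding W_def F1_set_def disjnt_def by auto
  ultimately show "\<exists>T. openin (Fn n X) T \<and> A \<in> T \<and> T \<subseteq> Fn_set n X - F1_set X"
    by blast
qed

lemma non_singletons_dense_in_Fn: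
  assumes perfect: "X derived_set_of topspace X = topspace X" and "n \<ge> 2"
    and U: "openin (Fn n X) U" "U \<noteq> {}"
  shows "U \<inter> (Fn_set n X - F1_set X) \<noteq> {}"
proof -
  obtain A where A: "A \<in> U"
    using U(2) by blast
  then have "A \<in> Fn_set n X"
    using openin_subset[OF U(1)] by (simp add: topspace_Fn subset_iff)
  show ?thesis
  proof (cases "A \<in> F1_set X")
    case False
    then show ?thesis
      using A \<open>A \<in> Fn_set n X\<close> by blast
  next
    case True
    then obtain x where x: "A = {x}" "x \<in> topspace X"
      unfolding F1_set_def by blast
    then obtain W where W: "openin X W" "x \<in> W" "{B \<in> Fn_set n X. B \<subseteq> W} \<subseteq> U"
      using openin_Fn_singleton_nhood[OF U(1)] A by blast
    have "x \<in> X derived_set_of topspace X"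
      using perfect x(2) by simp
    then obtain y where y: "y \<noteq> x" "y \<in> topspace X" "y \<in> W"
      using W(1,2) unfolding in_derived_set_of by blast
    have "{x, y} \<in> Fn_set n X"
      using x(2) y(2) \<open>n \<ge> 2\<close> unfolding Fn_set_def by (simp add: card_insert_if)
    then have "{x, y} \<in> U"
      using W(2,3) y(3) by blast
    moreover have "{x, y} \<notin> F1_set X"
      using y(1) unfolding F1_set_def by (auto simp: doubleton_eq_iff)
    ultimately show ?thesis
      using \<open>{x, y} \<in> Fn_set n X\<close> by blast
  qed
qed

lemma dyn_transitive_from_Fn:
  assumes "n \<ge> 1" and trans: "dyn_transitive (Fn n X) (Fn_map f)"
  shows "dyn_transitive X f"
  unfolding dyn_transitive_def
proof (intro allI impI)
  fix U V
  assume UV: "openin X U \<and> U \<noteq> {} \<and> openin X V \<and> V \<noteq> {}"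
  let ?U = "{A \<in> Fn_set n X. A \<subseteq> U}" and ?V = "{A \<in> Fn_set n X. A \<subseteq> V}"
  obtain u v where "u \<in> U" "v \<in> V"
    using UV by blast
  moreover have "U \<subseteq> topspace X" "V \<subseteq> topspace X"
    using UV openin_subset by blast+
  ultimately have "{u} \<in> ?U" "{v} \<in> ?V"
    by (auto intro: singleton_in_Fn_set[OF _ assms(1)])
  then have "openin (Fn n X) ?U" "?U \<noteq> {}" "openin (Fn n X) ?V" "?V \<noteq> {}"
    using UV openin_Fn_subset by auto
  then obtain k A where k: "k \<ge> 1" "A \<in> ?U" "(Fn_map f ^^ k) A \<in> ?V"
    by (rule dyn_transitiveD[OF trans])
  obtain a where "a \<in> A"
    using k(2) unfolding Fn_set_def by blast
  then have "a \<in> U" "(f ^^ k) a \<in> V"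
    using k(2,3) unfolding funpow_Fn_map Fn_map_def by auto
  then show "\<exists>k\<ge>1. (f ^^ k) ` U \<inter> V \<noteq> {}"
    using k(1) by blast
qed

lemma periodic_points_dense_from_Fn:
  assumes "n \<ge> 1"
    and dense: "Fn n X closure_of periodic_points (Fn n X) (Fn_map f) = topspace (Fn n X)"
  shows "X closure_of periodic_points X f = topspace X"
  unfolding dense_intersects_open
proof (intro allI impI)
  fix W assume W: "openin X W \<and> W \<noteq> {}"
  let ?W = "{A \<in> Fn_set n X. A \<subseteq> W}"
  obtain w where "w \<in> W"
    using W by blast
  moreover have "W \<subseteq> topspace X"
    using W openin_subset by blast
  ultimately have "{w} \<in> ?W"
    by (auto intro: singleton_in_Fn_set[OF _ assms(1)])
  then have "openin (Fn n X) ?W" "?W \<noteq> {}"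
    using W openin_Fn_subset by auto
  then obtain A where A: "A \<in> periodic_points (Fn n X) (Fn_map f)" "A \<in> ?W"
    using dense unfolding dense_intersects_open by blast
  then obtain k where k: "k \<ge> 1" "(f ^^ k) ` A = A"
    unfolding periodic_points_def funpow_Fn_map Fn_map_def by blast
  obtain a where "a \<in> A" "finite A"
    using A(2) unfolding Fn_set_def by blast
  then obtain b d where b: "b \<in> A" "d \<ge> 1" "((f ^^ k) ^^ d) b = b"
    using k(2) finite_self_map_has_periodic_point[of A "f ^^ k" a] by blast
  have "(f ^^ (k * d)) b = b" "k * d \<ge> 1"
    using b k(1) by (simp_all add: funpow_mult)
  moreover have "b \<in> topspace X" "b \<in> W"
    using A(2) b(1) unfolding Fn_set_def by blast+
  ultimately show "periodic_points X f \<inter> W \<noteq> {}"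
    unfolding periodic_points_def by blast
qed

lemma F_system_from_Fn:
  assumes "n \<ge> 1" "F_system (Fn n X) (Fn_map f)"
  shows "F_system X f"
proof (rule F_system_of_powers[OF _ _ assms(2)])
  show "dyn_transitive X (f ^^ m)" if "dyn_transitive (Fn n X) (Fn_map f ^^ m)" for m
    using dyn_transitive_from_Fn[OF assms(1)] that unfolding funpow_Fn_map .
  show "Fn n X closure_of periodic_points (Fn n X) (Fn_map f) = topspace (Fn n X) \<Longrightarrow>
      X closure_of periodic_points X f = topspace X"
    by (rule periodic_points_dense_from_Fn[OF assms(1)])
qed

lemma SFq_eq_non_singleton:
  assumes "B \<notin> F1_set X" "SFq n X A = SFq n X B"
  shows "A = B"
  using assms unfolding SFq_def by (auto split: if_splits)

lemma openin_SFn: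
  "openin (SFn n X) U \<longleftrightarrow>
     U \<subseteq> SFq n X ` Fn_set n X \<and> openin (Fn n X) {A \<in> Fn_set n X. SFq n X A \<in> U}"
  unfolding SFn_def openin_quotient_topology topspace_Fn ..

lemma topspace_SFn: "topspace (SFn n X) = SFq n X ` Fn_set n X"
proof
  show "topspace (SFn n X) \<subseteq> SFq n X ` Fn_set n X"
    unfolding topspace_def openin_SFn by blast
  have "{A \<in> Fn_set n X. SFq n X A \<in> SFq n X ` Fn_set n X} = Fn_set n X"
    by blast
  then have "openin (SFn n X) (SFq n X ` Fn_set n X)"
    unfolding openin_SFn using openin_topspace[of "Fn n X"] by (simp add: topspace_Fn)
  then show "SFq n X ` Fn_set n X \<subseteq> topspace (SFn n X)"
    by (rule openin_subset)
qed

lemma continuous_map_SFq: "continuous_map (Fn n X) (SFn n X) (SFq n X)"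
  unfolding continuous_map topspace_Fn topspace_SFn
  by (simp add: openin_SFn)

lemma semiconj_on_SFq:
  assumes f: "f ` topspace X \<subseteq> topspace X"
  shows "semiconj_on (Fn n X) (Fn_map f) (SFq n X) (SFn_map n X f)"
  unfolding semiconj_on_def topspace_Fn
proof (intro conjI ballI)
  show "Fn_map f ` Fn_set n X \<subseteq> Fn_set n X"
    using Fn_map_in_Fn_set[OF f] by blast
  fix A assume A: "A \<in> Fn_set n X"
  show "SFn_map n X f (SFq n X A) = SFq n X (Fn_map f A)"
  proof (cases "A \<in> F1_set X")
    case True
    then obtain x where "A = {x}" "x \<in> topspace X"
      unfolding F1_set_def by blast
    then have "Fn_map f A \<in> F1_set X"
      using f unfolding F1_set_def Fn_map_def by auto
    then show ?thesis
      using True unfolding SFn_map_def SF_point_def SFq_def by simp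
  next
    case False
    then have "SFq n X A = {A}" "SFq n X A \<noteq> SF_point X"
      unfolding SFq_def SF_point_def by auto
    moreover have "{A' \<in> topspace (Fn n X). SFq n X A' = SFq n X A} = {A}"
      using A SFq_eq_non_singleton[OF False] unfolding topspace_Fn by blast
    ultimately show ?thesis
      unfolding SFn_map_def by simp
  qed
qed

lemma openin_SFn_image:
  assumes "Hausdorff_space X" "openin (Fn n X) U"
  shows "openin (SFn n X) (SFq n X ` (U \<inter> (Fn_set n X - F1_set X)))"
proof -
  let ?U = "U \<inter> (Fn_set n X - F1_set X)"
  have "{A \<in> Fn_set n X. SFq n X A \<in> SFq n X ` ?U} = ?U"
    using SFq_eq_non_singleton by blast
  moreover have "openin (Fn n X) ?U"
    using assms openin_Fn_non_singletons by blast
  ultimately show ?thesis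
    unfolding openin_SFn by auto
qed

lemma F_system_SFn_from_Fn:
  assumes "f ` topspace X \<subseteq> topspace X" "F_system (Fn n X) (Fn_map f)"
  shows "F_system (SFn n X) (SFn_map n X f)"
proof (rule F_system_factor[OF continuous_map_SFq _ semiconj_on_SFq[OF assms(1)] assms(2)])
  show "SFq n X ` topspace (Fn n X) = topspace (SFn n X)"
    by (simp add: topspace_Fn topspace_SFn)
qed

lemma F_system_Fn_from_SFn:
  assumes "Hausdorff_space X" "X derived_set_of topspace X = topspace X" "n \<ge> 2"
    and "f ` topspace X \<subseteq> topspace X" "F_system (SFn n X) (SFn_map n X f)"
  shows "F_system (Fn n X) (Fn_map f)"
proof (rule F_system_lift[OF _ _ _ semiconj_on_SFq[OF assms(4)] assms(5)])
  show "U \<inter> (Fn_set n X - F1_set X) \<noteq> {}" if "openin (Fn n X) U" "U \<noteq> {}" for U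
    using non_singletons_dense_in_Fn[OF assms(2,3) that] .
  show "openin (SFn n X) (SFq n X ` (U \<inter> (Fn_set n X - F1_set X)))" if "openin (Fn n X) U" for U
    using openin_SFn_image[OF assms(1) that] .
  show "A = B" if "B \<in> Fn_set n X - F1_set X" "SFq n X A = SFq n X B" for A B
    using SFq_eq_non_singleton that by blast
qed

theorem theorem19:
  fixes X :: "'a topology" and n :: nat and f :: "'a \<Rightarrow> 'a"
  assumes "compactum X" and "n \<ge> 2"
    and "f ` topspace X \<subseteq> topspace X"
  shows "(F_system (Fn n X) (Fn_map f) \<longleftrightarrow> F_system (SFn n X) (SFn_map n X f))
       \<and> (F_system (Fn n X) (Fn_map f) \<longrightarrow> F_system X f)"
proof -
  have Hausdorff: "Hausdorff_space X" and perfect: "X derived_set_of topspace X = topspace X"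
    using assms(1) unfolding compactum_def by blast+
  have "F_system (Fn n X) (Fn_map f) \<Longrightarrow> F_system (SFn n X) (SFn_map n X f)"
    using F_system_SFn_from_Fn[OF assms(3)] .
  moreover have "F_system (SFn n X) (SFn_map n X f) \<Longrightarrow> F_system (Fn n X) (Fn_map f)"
    using F_system_Fn_from_SFn[OF Hausdorff perfect assms(2,3)] .
  moreover have "F_system (Fn n X) (Fn_map f) \<Longrightarrow> F_system X f"
    using F_system_from_Fn[of n] assms(2) by simp
  ultimately show ?thesis
    by blast
qed

end
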